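(* If $Z$ is an integer-valued random variable with finite variance $\sigma_Z^2$, then $$\sup_{n\in\mathbb Z}P(Z=n)\ge\frac{1}{6\sigma_Z+4}.$$ *)

theory Defs
  imports "HOL-Probability.Probability"
begin

end

theory Submission
  imports Defs
begin

text \<open>
  By Chebyshev's inequality with \<open>t = 2\<sigma> + 1/2\<close>, the variable \<open>Z\<close> stays in
  \<open>[\<mu> - t, \<mu> + t]\<close> with probability at least \<open>3/4\<close>. That interval contains at most
  \<open>2t + 1 = 4\<sigma> + 2\<close> integers, so the largest point mass \<open>p\<close> satisfies
  \<open>(4\<sigma> + 2) p \<ge> 3/4\<close>, i.e. \<open>p \<ge> 3 / (16\<sigma> + 8) \<ge> 1 / (6\<sigma> + 4)\<close>.
\<close>

lemma card_integers_between_le: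
  fixes a b :: real
  assumes "a \<le> b"
  shows "real (card {\<lceil>a\<rceil>..\<lfloor>b\<rfloor>}) \<le> b - a + 1"
proof -
  have "real_of_int \<lfloor>b\<rfloor> \<le> b" "a \<le> real_of_int \<lceil>a\<rceil>" by simp_all
  then show ?thesis using assms by (simp add: of_nat_nat) linarith
qed

lemma (in prob_space) prob_abs_diff_expectation_less_ge:
  fixes X :: "'a \<Rightarrow> real"
  assumes [measurable]: "random_variable borel X"
    and "integrable M (\<lambda>x. (X x)\<^sup>2)"
    and "t > 0"
  shows "1 - variance X / t\<^sup>2 \<le> prob {x \<in> space M. \<bar>X x - expectation X\<bar> < t}"
proof -
  let ?far = "{x \<in> space M. \<bar>X x - expectation X\<bar> \<ge> t}"
  have "{x \<in> space M. \<bar>X x - expectation X\<bar> < t} = space M - ?far" by auto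
  moreover have "?far \<in> events" by measurable
  ultimately have "prob {x \<in> space M. \<bar>X x - expectation X\<bar> < t} = 1 - prob ?far"
    by (simp add: prob_compl)
  moreover have "prob ?far \<le> variance X / t\<^sup>2"
    using Chebyshev_inequality assms by simp
  ultimately show ?thesis by simp
qed

lemma (in prob_space) bdd_above_point_masses:
  "bdd_above (range (\<lambda>n. prob {x \<in> space M. Z x = n}))"
  by (rule bdd_aboveI[of _ 1]) auto

lemma (in prob_space) prob_int_between_le_SUP_point_mass:
  fixes Z :: "'a \<Rightarrow> int" and a b :: real
  assumes [measurable]: "Z \<in> measurable M (count_space UNIV)"
    and "a \<le> b"
  shows "prob {x \<in> space M. a \<le> Z x \<and> Z x \<le> b}
           \<le> (b - a + 1) * (SUP n. prob {x \<in> space M. Z x = n})"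
proof -
  define p where "p = (SUP n. prob {x \<in> space M. Z x = n})"
  have point_mass_le: "prob {x \<in> space M. Z x = n} \<le> p" for n
    unfolding p_def by (rule cSUP_upper[OF _ bdd_above_point_masses]) simp
  have "{x \<in> space M. a \<le> Z x \<and> Z x \<le> b} = (\<Union>n\<in>{\<lceil>a\<rceil>..\<lfloor>b\<rfloor>}. {x \<in> space M. Z x = n})"
    by (auto simp: ceiling_le_iff le_floor_iff)
  then have "prob {x \<in> space M. a \<le> Z x \<and> Z x \<le> b}
               \<le> (\<Sum>n\<in>{\<lceil>a\<rceil>..\<lfloor>b\<rfloor>}. prob {x \<in> space M. Z x = n})"
    by (simp add: measure_UNION_le)
  also have "\<dots> \<le> (\<Sum>n\<in>{\<lceil>a\<rceil>..\<lfloor>b\<rfloor>}. p)"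
    by (intro sum_mono point_mass_le)
  also have "\<dots> = real (card {\<lceil>a\<rceil>..\<lfloor>b\<rfloor>}) * p"
    by (rule sum_constant)
  also have "\<dots> \<le> (b - a + 1) * p"
    by (intro mult_right_mono card_integers_between_le[OF \<open>a \<le> b\<close>]
        order_trans[OF measure_nonneg point_mass_le])
  finally show ?thesis unfolding p_def .
qed

theorem lemma5p6:
  fixes M :: "'a measure" and Z :: "'a \<Rightarrow> int"
  assumes "prob_space M"
    and "Z \<in> measurable M (count_space UNIV)"
    and "integrable M (\<lambda>x. (real_of_int (Z x))\<^sup>2)"
  shows "(SUP n::int. measure M {x \<in> space M. Z x = n})
           \<ge> 1 / (6 * sqrt (prob_space.variance M (\<lambda>x. real_of_int (Z x))) + 4)"
proof -
  interpret prob_space M by (rule assms(1))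
  note [measurable] = assms(2)
  define \<mu> where "\<mu> = expectation (\<lambda>x. real_of_int (Z x))"
  define \<sigma> where "\<sigma> = sqrt (variance (\<lambda>x. real_of_int (Z x)))"
  define p where "p = (SUP n. prob {x \<in> space M. Z x = n})"
  define t where "t = 2 * \<sigma> + 1/2"
  have "\<sigma> \<ge> 0" and \<sigma>_sq: "\<sigma>\<^sup>2 = variance (\<lambda>x. real_of_int (Z x))"
    unfolding \<sigma>_def by simp_all
  have "t > 0" and "4 * \<sigma>\<^sup>2 \<le> t\<^sup>2"
    using \<open>\<sigma> \<ge> 0\<close> unfolding t_def by (simp_all add: power2_eq_square algebra_simps)
  then have "\<sigma>\<^sup>2 / t\<^sup>2 \<le> 1/4"
    by (simp add: divide_simps)
  then have "3/4 \<le> 1 - \<sigma>\<^sup>2 / t\<^sup>2" by simp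
  also have "\<dots> \<le> prob {x \<in> space M. \<bar>real_of_int (Z x) - \<mu>\<bar> < t}"
    unfolding \<sigma>_sq \<mu>_def
    by (rule prob_abs_diff_expectation_less_ge) (use assms(3) \<open>t > 0\<close> in simp_all)
  also have "\<dots> \<le> prob {x \<in> space M. \<mu> - t \<le> Z x \<and> Z x \<le> \<mu> + t}"
    by (rule finite_measure_mono) auto
  also have "\<dots> \<le> ((\<mu> + t) - (\<mu> - t) + 1) * p"
    unfolding p_def using \<open>t > 0\<close> by (intro prob_int_between_le_SUP_point_mass assms(2)) simp
  also have "\<dots> = (4 * \<sigma> + 2) * p"
    unfolding t_def by simp
  finally have "3 / (16 * \<sigma> + 8) \<le> p"
    using \<open>\<sigma> \<ge> 0\<close> by (simp add: divide_simps algebra_simps)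
  moreover have "1 / (6 * \<sigma> + 4) \<le> 3 / (16 * \<sigma> + 8)"
    using \<open>\<sigma> \<ge> 0\<close> by (simp add: divide_simps)
  ultimately show ?thesis unfolding p_def \<sigma>_def by simp
qed

end
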